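(* Let $1\le k\le d\le n-1$, $h=1$, $\beta=\frac{2M}{k(2d-k+3)}$ (assumed a positive integer), $\alpha=(d+1)\beta$ and $\alpha'=k\beta$. Then, over a sufficiently large finite field, there exist linear codes for $\mathrm{DSS}(n,k,d,1,\alpha,\alpha',\beta,M)$ such that when each of the $d$ surviving complete nodes and the repairing storage node transmits $\beta$ packets to the new node, the reconstruction property (any $k$ complete nodes recover the file) is maintained under failures/repairs.
   Context: $\mathrm{DSS}(n,k,d,h,\alpha,\alpha',\beta,M)$: a file of $M$ packets over $\mathrm{GF}(q)$ is stored on $n$ complete storage nodes of capacity $\alpha$ each (each storing linear combinations of the file packets) so that any $k$ of them reconstruct the file; in addition there are $h$ repairing storage nodes of capacity $\alpha'<\alpha$, which never fail and are never contacted by data collectors. When a complete node fails, a new node is created from $\beta$ packets (linear combinations of stored data) received from each of $d$ surviving complete nodes and from each of the $h$ repairing nodes; repair is functional. *)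

theory Defs
  imports "HOL-Algebra.Ring"
begin

text \<open>A node storing a packets is given by an a x M coefficient matrix G
  (function nat => nat => 'b, only indices r < a, c < M matter);
  its r-th stored packet is the linear combination stored F M G r x.\<close>

definition stored :: "('b, 'm) ring_scheme \<Rightarrow> nat \<Rightarrow> (nat \<Rightarrow> nat \<Rightarrow> 'b) \<Rightarrow> nat \<Rightarrow> (nat \<Rightarrow> 'b) \<Rightarrow> 'b" where
  "stored F M G r x = finsum F (\<lambda>c. G r c \<otimes>\<^bsub>F\<^esub> x c) {..<M}"

definition is_vec :: "('b, 'm) ring_scheme \<Rightarrow> nat \<Rightarrow> (nat \<Rightarrow> 'b) \<Rightarrow> bool" where
  "is_vec F M x \<longleftrightarrow> (\<forall>c<M. x c \<in> carrier F)"

definition is_mat :: "('b, 'm) ring_scheme \<Rightarrow> nat \<Rightarrow> nat \<Rightarrow> (nat \<Rightarrow> nat \<Rightarrow> 'b) \<Rightarrow> bool" where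
  "is_mat F a b G \<longleftrightarrow> (\<forall>r<a. \<forall>c<b. G r c \<in> carrier F)"

definition recovers :: "('b, 'm) ring_scheme \<Rightarrow> nat \<Rightarrow> nat \<Rightarrow> (nat \<Rightarrow> nat \<Rightarrow> nat \<Rightarrow> 'b) \<Rightarrow> nat set \<Rightarrow> bool" where
  "recovers F M \<alpha> N K \<longleftrightarrow>
     (\<forall>x y. is_vec F M x \<longrightarrow> is_vec F M y \<longrightarrow>
        (\<forall>i\<in>K. \<forall>r<\<alpha>. stored F M (N i) r x = stored F M (N i) r y) \<longrightarrow>
        (\<forall>c<M. x c = y c))"

text \<open>Coefficients used in one repair:
  hB j s r : helper complete node j sends as its s-th packet (s < beta)
             the combination of its stored packets r < alpha;
  rB s r   : the repairing node sends as its s-th packet (s < beta)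
             the combination of its stored packets r < alpha';
  hC t j s, rC t s : the new node's t-th packet (t < alpha) is the
             combination of all received packets.\<close>
record 'b repair_coeffs =
  hB :: "nat \<Rightarrow> nat \<Rightarrow> nat \<Rightarrow> 'b"
  rB :: "nat \<Rightarrow> nat \<Rightarrow> 'b"
  hC :: "nat \<Rightarrow> nat \<Rightarrow> nat \<Rightarrow> 'b"
  rC :: "nat \<Rightarrow> nat \<Rightarrow> 'b"

definition coeffs_ok :: "('b, 'm) ring_scheme \<Rightarrow> nat \<Rightarrow> nat \<Rightarrow> nat \<Rightarrow> nat set \<Rightarrow> 'b repair_coeffs \<Rightarrow> bool" where
  "coeffs_ok F \<alpha> \<alpha>' \<beta> D co \<longleftrightarrow>
     (\<forall>j\<in>D. \<forall>s<\<beta>. \<forall>r<\<alpha>. hB co j s r \<in> carrier F) \<and>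
     (\<forall>s<\<beta>. \<forall>r<\<alpha>'. rB co s r \<in> carrier F) \<and>
     (\<forall>t<\<alpha>. \<forall>j\<in>D. \<forall>s<\<beta>. hC co t j s \<in> carrier F) \<and>
     (\<forall>t<\<alpha>. \<forall>s<\<beta>. rC co t s \<in> carrier F)"

text \<open>Coefficient matrix (w.r.t. the file) of the newly created node, when the
  helpers D (complete nodes with matrices N j) and the repairing node (matrix R)
  send beta packets each, combined according to co.\<close>
definition repair_node :: "('b, 'm) ring_scheme \<Rightarrow> nat \<Rightarrow> nat \<Rightarrow> nat \<Rightarrow>
    (nat \<Rightarrow> nat \<Rightarrow> nat \<Rightarrow> 'b) \<Rightarrow> (nat \<Rightarrow> nat \<Rightarrow> 'b) \<Rightarrow> nat set \<Rightarrow> 'b repair_coeffs \<Rightarrow> (nat \<Rightarrow> nat \<Rightarrow> 'b)" where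
  "repair_node F \<alpha> \<alpha>' \<beta> N R D co = (\<lambda>t c.
     finsum F (\<lambda>j. finsum F (\<lambda>s. hC co t j s \<otimes>\<^bsub>F\<^esub>
                 finsum F (\<lambda>r. hB co j s r \<otimes>\<^bsub>F\<^esub> N j r c) {..<\<alpha>}) {..<\<beta>}) D
     \<oplus>\<^bsub>F\<^esub>
     finsum F (\<lambda>s. rC co t s \<otimes>\<^bsub>F\<^esub>
                 finsum F (\<lambda>r. rB co s r \<otimes>\<^bsub>F\<^esub> R r c) {..<\<alpha>'}) {..<\<beta>})"

text \<open>A failure/repair event (i, D): complete node i fails and the set D of
  surviving complete nodes are the helpers.\<close>
type_synonym event = "nat \<times> nat set"

definition valid_event :: "nat \<Rightarrow> nat \<Rightarrow> event \<Rightarrow> bool" where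
  "valid_event n d e \<longleftrightarrow> fst e < n \<and> snd e \<subseteq> {..<n} - {fst e} \<and> card (snd e) = d"

text \<open>State of the complete nodes after a sequence of events (oldest first).
  The repair strategy sigma may depend on the whole history of past events.\<close>
primrec run_rev :: "('b, 'm) ring_scheme \<Rightarrow> nat \<Rightarrow> nat \<Rightarrow> nat \<Rightarrow>
    (nat \<Rightarrow> nat \<Rightarrow> nat \<Rightarrow> 'b) \<Rightarrow> (nat \<Rightarrow> nat \<Rightarrow> 'b) \<Rightarrow>
    (event list \<Rightarrow> event \<Rightarrow> 'b repair_coeffs) \<Rightarrow> event list \<Rightarrow> (nat \<Rightarrow> nat \<Rightarrow> nat \<Rightarrow> 'b)" where
  "run_rev F \<alpha> \<alpha>' \<beta> N0 R \<sigma> [] = N0"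
| "run_rev F \<alpha> \<alpha>' \<beta> N0 R \<sigma> (e # es) =
     (let N = run_rev F \<alpha> \<alpha>' \<beta> N0 R \<sigma> es
      in N(fst e := repair_node F \<alpha> \<alpha>' \<beta> N R (snd e) (\<sigma> (rev es) e)))"

definition run :: "('b, 'm) ring_scheme \<Rightarrow> nat \<Rightarrow> nat \<Rightarrow> nat \<Rightarrow>
    (nat \<Rightarrow> nat \<Rightarrow> nat \<Rightarrow> 'b) \<Rightarrow> (nat \<Rightarrow> nat \<Rightarrow> 'b) \<Rightarrow>
    (event list \<Rightarrow> event \<Rightarrow> 'b repair_coeffs) \<Rightarrow> event list \<Rightarrow> (nat \<Rightarrow> nat \<Rightarrow> nat \<Rightarrow> 'b)" where
  "run F \<alpha> \<alpha>' \<beta> N0 R \<sigma> es = run_rev F \<alpha> \<alpha>' \<beta> N0 R \<sigma> (rev es)"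

end

theory Submission
  imports Defs "HOL-Algebra.Polynomial_Divisibility"
begin

text \<open>The code is a product-matrix code.
  With \<psi>_i = (1, p_i, ..., p_i^d) for distinct field elements p_i, complete node i stores the rows
  \<psi>_i^T X_s, and the repairing node stores the last columns of the X_s.

  To replace node f, helper j sends \<psi>_j^T X_s \<psi>_f and the repairing node sends the last entry of
  X_s \<psi>_f. These are d values and the top coefficient of the polynomial of degree d with
  coefficient vector X_s \<psi>_f = (\<psi>_f^T X_s)^T, so Lagrange interpolation recovers exactly the
  content of the failed node. Hence repairs never change the stored data, and it suffices that any
  k nodes recover the file from the initial code: the columns b \<ge> k of X_s are polynomials of
  degree below k, known at k points, and by symmetry the remaining columns then are as well.\<close>

lemma (in abelian_monoid) finsum_swap:
  assumes "finite A" "finite B" "\<And>a b. a \<in> A \<Longrightarrow> b \<in> B \<Longrightarrow> f a b \<in> carrier G"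
  shows "(\<Oplus>a\<in>A. \<Oplus>b\<in>B. f a b) = (\<Oplus>b\<in>B. \<Oplus>a\<in>A. f a b)"
  using assms(1,3)
proof (induction A rule: finite_induct)
  case empty thus ?case by (simp add: finsum_zero[symmetric] del: finsum_zero)
next
  case (insert x F)
  have "(\<Oplus>a\<in>insert x F. \<Oplus>b\<in>B. f a b) = (\<Oplus>b\<in>B. f x b) \<oplus> (\<Oplus>b\<in>B. \<Oplus>a\<in>F. f a b)"
    using insert assms(2) by (subst finsum_insert) (auto intro!: finsum_closed)
  also have "\<dots> = (\<Oplus>b\<in>B. f x b \<oplus> (\<Oplus>a\<in>F. f a b))"
    using insert assms(2) by (subst finsum_addf) (auto intro!: finsum_closed)
  also have "\<dots> = (\<Oplus>b\<in>B. \<Oplus>a\<in>insert x F. f a b)"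
    using insert assms(2) by (intro finsum_cong') (auto intro!: finsum_closed)
  finally show ?case .
qed

context cring begin

definition eval_coeffs :: "(nat \<Rightarrow> 'a) \<Rightarrow> nat \<Rightarrow> 'a \<Rightarrow> 'a" where
  "eval_coeffs g N x = (\<Oplus>a\<in>{..<N}. g a \<otimes> x [^] a)"

lemma eval_coeffs_closed:
  "(\<And>a. a < N \<Longrightarrow> g a \<in> carrier R) \<Longrightarrow> x \<in> carrier R \<Longrightarrow> eval_coeffs g N x \<in> carrier R"
  unfolding eval_coeffs_def by (intro finsum_closed) auto

lemma eval_coeffs_Suc:
  "(\<And>a. a \<le> N \<Longrightarrow> g a \<in> carrier R) \<Longrightarrow> x \<in> carrier R \<Longrightarrow>
   eval_coeffs g (Suc N) x = g N \<otimes> x [^] N \<oplus> eval_coeffs g N x"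
  unfolding eval_coeffs_def lessThan_Suc by (subst finsum_insert) auto

lemma eval_coeffs_cong:
  "(\<And>a. a < N \<Longrightarrow> g a = h a) \<Longrightarrow> (\<And>a. a < N \<Longrightarrow> h a \<in> carrier R) \<Longrightarrow> x \<in> carrier R \<Longrightarrow>
   eval_coeffs g N x = eval_coeffs h N x"
  unfolding eval_coeffs_def by (intro finsum_cong') auto

lemma eval_coeffs_diff:
  assumes "\<And>a. g a \<in> carrier R" "\<And>a. h a \<in> carrier R" "x \<in> carrier R"
  shows "eval_coeffs (\<lambda>a. g a \<ominus> h a) N x = eval_coeffs g N x \<ominus> eval_coeffs h N x"
proof (induction N)
  case 0 thus ?case by (simp add: eval_coeffs_def a_minus_def)
next
  case (Suc N)
  have closed: "eval_coeffs g N x \<in> carrier R" "eval_coeffs h N x \<in> carrier R"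
    "x [^] N \<in> carrier R" "g N \<in> carrier R" "h N \<in> carrier R"
    using assms by (auto intro: eval_coeffs_closed)
  have "eval_coeffs (\<lambda>a. g a \<ominus> h a) (Suc N) x
      = (g N \<ominus> h N) \<otimes> x [^] N \<oplus> (eval_coeffs g N x \<ominus> eval_coeffs h N x)"
    using assms Suc by (simp add: eval_coeffs_Suc)
  also have "\<dots> = (g N \<otimes> x [^] N \<oplus> eval_coeffs g N x) \<ominus> (h N \<otimes> x [^] N \<oplus> eval_coeffs h N x)"
    using closed by algebra
  finally show ?case using assms by (simp add: eval_coeffs_Suc)
qed

lemma eval_coeffs_mult_const:
  "(\<And>a. g a \<in> carrier R) \<Longrightarrow> c \<in> carrier R \<Longrightarrow> x \<in> carrier R \<Longrightarrow>
   eval_coeffs (\<lambda>a. g a \<otimes> c) N x = eval_coeffs g N x \<otimes> c"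
  unfolding eval_coeffs_def by (subst finsum_ldistr) (auto intro!: finsum_cong' simp: m_ac)

lemma finsum_eval_coeffs_Suc:
  assumes "finite D" and w: "\<And>j. j \<in> D \<Longrightarrow> w j \<in> carrier R" and x: "\<And>j. j \<in> D \<Longrightarrow> x j \<in> carrier R"
    and g: "\<And>a. g a \<in> carrier R"
  shows "(\<Oplus>j\<in>D. w j \<otimes> eval_coeffs g (Suc N) (x j))
       = (\<Oplus>j\<in>D. w j \<otimes> x j [^] N) \<otimes> g N \<oplus> (\<Oplus>j\<in>D. w j \<otimes> eval_coeffs g N (x j))"
proof -
  have "w j \<otimes> eval_coeffs g (Suc N) (x j) = (w j \<otimes> x j [^] N) \<otimes> g N \<oplus> w j \<otimes> eval_coeffs g N (x j)"
    if "j \<in> D" for j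
  proof -
    have closed: "eval_coeffs g N (x j) \<in> carrier R" "x j [^] N \<in> carrier R" "g N \<in> carrier R"
      "w j \<in> carrier R"
      using g w x that by (auto intro: eval_coeffs_closed)
    have "w j \<otimes> eval_coeffs g (Suc N) (x j) = w j \<otimes> (g N \<otimes> x j [^] N \<oplus> eval_coeffs g N (x j))"
      using g x[OF that] by (simp add: eval_coeffs_Suc)
    also have "\<dots> = (w j \<otimes> x j [^] N) \<otimes> g N \<oplus> w j \<otimes> eval_coeffs g N (x j)"
      using closed by algebra
    finally show ?thesis .
  qed
  moreover have ev: "\<And>j. j \<in> D \<Longrightarrow> eval_coeffs g N (x j) \<in> carrier R"
    using g x by (intro eval_coeffs_closed) auto
  ultimately have "(\<Oplus>j\<in>D. w j \<otimes> eval_coeffs g (Suc N) (x j))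
      = (\<Oplus>j\<in>D. (w j \<otimes> x j [^] N) \<otimes> g N \<oplus> w j \<otimes> eval_coeffs g N (x j))"
    using w x g by (intro finsum_cong') auto
  also have "\<dots> = (\<Oplus>j\<in>D. (w j \<otimes> x j [^] N) \<otimes> g N) \<oplus> (\<Oplus>j\<in>D. w j \<otimes> eval_coeffs g N (x j))"
    using w x g ev by (intro finsum_addf) auto
  also have "(\<Oplus>j\<in>D. (w j \<otimes> x j [^] N) \<otimes> g N) = (\<Oplus>j\<in>D. w j \<otimes> x j [^] N) \<otimes> g N"
    using w x g \<open>finite D\<close> by (intro finsum_ldistr[symmetric]) auto
  finally show ?thesis .
qed

lemma eval_coeffs_finsum:
  assumes "finite D" and L: "\<And>j a. j \<in> D \<Longrightarrow> L j a \<in> carrier R" and y: "\<And>j. j \<in> D \<Longrightarrow> y j \<in> carrier R"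
    and "x \<in> carrier R"
  shows "eval_coeffs (\<lambda>a. \<Oplus>j\<in>D. L j a \<otimes> y j) N x = (\<Oplus>j\<in>D. eval_coeffs (L j) N x \<otimes> y j)"
proof -
  have "(\<Oplus>j\<in>D. L j a \<otimes> y j) \<otimes> x [^] a = (\<Oplus>j\<in>D. (L j a \<otimes> x [^] a) \<otimes> y j)" for a
    using assms by (subst finsum_ldistr) (auto intro!: finsum_cong' simp: m_ac)
  hence "eval_coeffs (\<lambda>a. \<Oplus>j\<in>D. L j a \<otimes> y j) N x = (\<Oplus>a\<in>{..<N}. \<Oplus>j\<in>D. (L j a \<otimes> x [^] a) \<otimes> y j)"
    unfolding eval_coeffs_def using assms by (intro finsum_cong') (auto intro!: finsum_closed)
  also have "\<dots> = (\<Oplus>j\<in>D. \<Oplus>a\<in>{..<N}. (L j a \<otimes> x [^] a) \<otimes> y j)"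
    using assms by (intro finsum_swap) auto
  also have "\<dots> = (\<Oplus>j\<in>D. eval_coeffs (L j) N x \<otimes> y j)"
    unfolding eval_coeffs_def using assms by (intro finsum_cong') (auto intro!: finsum_closed simp: finsum_ldistr)
  finally show ?thesis .
qed

lemma eval_eq_eval_coeffs_length:
  assumes "set p \<subseteq> carrier R" "x \<in> carrier R"
  shows "eval p x = eval_coeffs (coeff p) (length p) x"
  using assms(1)
proof (induction p)
  case Nil thus ?case by (simp add: eval_coeffs_def)
next
  case (Cons c q)
  have "\<And>i. coeff q i \<in> carrier R" using Cons by auto
  moreover have "eval_coeffs (coeff (c # q)) (length q) x = eval_coeffs (coeff q) (length q) x"
    by (rule eval_coeffs_cong) (use Cons(2) assms(2) in auto)
  ultimately show ?case using Cons assms(2) by (simp add: eval_coeffs_Suc)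
qed

lemma eval_eq_eval_coeffs:
  assumes "set p \<subseteq> carrier R" "x \<in> carrier R" "length p \<le> N"
  shows "eval p x = eval_coeffs (coeff p) N x"
  using assms(3)
proof (induction N)
  case 0 thus ?case using eval_eq_eval_coeffs_length[OF assms(1,2)] by simp
next
  case (Suc N)
  show ?case
  proof (cases "length p = Suc N")
    case True thus ?thesis using eval_eq_eval_coeffs_length[OF assms(1,2)] by simp
  next
    case False
    hence "length p \<le> N" using Suc by simp
    moreover have "eval_coeffs (coeff p) N x \<in> carrier R"
      using assms by (intro eval_coeffs_closed) auto
    ultimately show ?thesis using Suc assms by (simp add: eval_coeffs_Suc coeff_length)
  qed
qed

end

context field begin

lemma card_roots_le_degree:
  assumes "p \<in> carrier (poly_ring R)"
  shows "card {x. is_root p x} \<le> degree p"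
proof -
  have "{x. is_root p x} = set_mset (roots p)"
    using roots_mem_iff_is_root[OF assms] by auto
  hence "card {x. is_root p x} \<le> size (roots p)"
    by (metis size_mset_set size_mset_mono mset_set_set_mset_msubset)
  also have "\<dots> \<le> degree p" by (rule size_roots_le_degree[OF assms])
  finally show ?thesis .
qed

lemma eval_coeffs_vanishing_imp_zero:
  assumes w: "\<And>a. w a \<in> carrier R" and S: "S \<subseteq> carrier R" "finite S" "m \<le> card S"
    and vanish: "\<And>x. x \<in> S \<Longrightarrow> eval_coeffs w N x = \<zero>"
    and deg: "\<And>a. m \<le> a \<Longrightarrow> a < N \<Longrightarrow> w a = \<zero>"
    and "a < N"
  shows "w a = \<zero>"
proof -
  define L where "L = rev (map w [0..<N])"
  have L: "set L \<subseteq> carrier R" using w unfolding L_def by auto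
  have coeff_L: "coeff L i = w i" if "i < N" for i
    using that coeff_nth[of i L] by (simp add: L_def rev_nth)
  have eval_L: "eval L x = eval_coeffs w N x" if "x \<in> carrier R" for x
    using eval_eq_eval_coeffs[OF L that, of N] coeff_L w that
    by (metis eval_coeffs_cong order_refl length_rev length_map length_upt diff_zero L_def)
  define P where "P = normalize L"
  have P: "P \<in> carrier (poly_ring R)"
    using normalize_gives_polynomial[OF L] unfolding P_def univ_poly_carrier .
  have coeff_P: "coeff P = coeff L" unfolding P_def by (rule normalize_coeff[symmetric])
  have "P = []"
  proof (rule ccontr)
    assume "P \<noteq> []"
    hence "lead_coeff P \<noteq> \<zero>"
      using P unfolding sym[OF univ_poly_carrier] polynomial_def by auto
    hence "coeff L (degree P) \<noteq> \<zero>" using lead_coeff_simp[OF \<open>P \<noteq> []\<close>] coeff_P by metis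
    hence "degree P < m"
      using deg coeff_length[of L] coeff_L by (metis L_def length_map length_rev length_upt diff_zero not_le)
    moreover have "S \<subseteq> {x. is_root P x}"
      using S(1) vanish eval_L \<open>P \<noteq> []\<close> eval_normalize[OF L] unfolding is_root_def P_def by auto
    hence "card S \<le> card {x. is_root P x}"
      using finite_number_of_roots[OF P] by (simp add: card_mono)
    ultimately show False using card_roots_le_degree[OF P] S(3) by simp
  qed
  thus ?thesis using coeff_P coeff_L \<open>a < N\<close> by (metis coeff.simps(1))
qed

lemma eval_coeffs_agree_imp_eq:
  assumes g: "\<And>a. g a \<in> carrier R" and h: "\<And>a. h a \<in> carrier R"
    and S: "S \<subseteq> carrier R" "finite S" "m \<le> card S"
    and agree: "\<And>x. x \<in> S \<Longrightarrow> eval_coeffs g N x = eval_coeffs h N x"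
    and deg: "\<And>a. m \<le> a \<Longrightarrow> a < N \<Longrightarrow> g a = h a"
    and "a < N"
  shows "g a = h a"
proof -
  have "g a \<ominus> h a = \<zero>"
  proof (rule eval_coeffs_vanishing_imp_zero[of "\<lambda>a. g a \<ominus> h a" S m N])
    fix x assume "x \<in> S"
    moreover have "eval_coeffs h N x \<in> carrier R" if "x \<in> S"
      using that S h by (intro eval_coeffs_closed) auto
    ultimately show "eval_coeffs (\<lambda>a. g a \<ominus> h a) N x = \<zero>"
      using eval_coeffs_diff[OF g h] agree S by (auto simp: r_right_minus_eq)
  qed (use g h S deg \<open>a < N\<close> in \<open>auto simp: r_right_minus_eq\<close>)
  thus ?thesis using g h r_right_minus_eq by blast
qed

end

primrec (in ring) linear_factors :: "'a list \<Rightarrow> 'a list" where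
  "linear_factors [] = [\<one>]"
| "linear_factors (a # as) = poly_mult [\<one>, \<ominus> a] (linear_factors as)"

context domain begin

lemma linear_factors_polynomial:
  "set as \<subseteq> carrier R \<Longrightarrow> polynomial (carrier R) (linear_factors as)"
proof (induction as)
  case Nil thus ?case using one_is_polynomial[OF carrier_is_subring] by simp
next
  case (Cons a as)
  have "polynomial (carrier R) [\<one>, \<ominus> a]" using Cons(2) unfolding polynomial_def by auto
  thus ?case using Cons poly_mult_closed[OF carrier_is_subring] by (simp del: poly_mult.simps)
qed

lemma length_linear_factors:
  "set as \<subseteq> carrier R \<Longrightarrow> length (linear_factors as) \<le> Suc (length as)"
proof (induction as)
  case Nil thus ?case by simp
next
  case (Cons a as)
  have "polynomial (carrier R) [\<one>, \<ominus> a]" using Cons(2) unfolding polynomial_def by auto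
  moreover have "polynomial (carrier R) (linear_factors as)"
    using Cons(2) linear_factors_polynomial by auto
  ultimately have "degree (linear_factors (a # as)) \<le> Suc (degree (linear_factors as))"
    using poly_mult_degree_eq[OF carrier_is_subring] by (auto simp del: poly_mult.simps)
  thus ?case using Cons by simp
qed

lemma eval_linear_factors_eq_zero_iff:
  "set as \<subseteq> carrier R \<Longrightarrow> x \<in> carrier R \<Longrightarrow> eval (linear_factors as) x = \<zero> \<longleftrightarrow> x \<in> set as"
proof (induction as)
  case Nil thus ?case by simp
next
  case (Cons a as)
  have factors: "set [\<one>, \<ominus> a] \<subseteq> carrier R" "set (linear_factors as) \<subseteq> carrier R"
    using Cons linear_factors_polynomial polynomial_incl by auto
  have "eval (linear_factors (a # as)) x = (x \<ominus> a) \<otimes> eval (linear_factors as) x"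
    using eval_poly_mult[OF factors Cons(3)] Cons by (simp add: minus_eq del: poly_mult.simps)
  moreover have "eval (linear_factors as) x \<in> carrier R" using eval_in_carrier[OF factors(2) Cons(3)] .
  moreover have "x \<ominus> a = \<zero> \<longleftrightarrow> x = a" using Cons by (simp add: r_right_minus_eq)
  ultimately show ?case using Cons integral_iff by auto
qed

end

context field begin

lemma lagrange_basis:
  assumes D: "finite D" "inj_on pt D" "pt ` D \<subseteq> carrier R" and "j \<in> D"
  shows "\<exists>l. (\<forall>a. l a \<in> carrier R) \<and>
           (\<forall>i\<in>D. eval_coeffs l (card D) (pt i) = (if i = j then \<one> else \<zero>))"
proof -
  obtain js where js: "set js = D - {j}" "distinct js"
    using finite_distinct_list D(1) by (metis finite_Diff)
  define as where "as = map pt js"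
  have as: "set as \<subseteq> carrier R" "set as = pt ` (D - {j})" "length as = card D - 1"
    using D \<open>j \<in> D\<close> js distinct_card[OF js(2)] unfolding as_def by auto
  define q where "q = linear_factors as"
  have q: "set q \<subseteq> carrier R"
    using linear_factors_polynomial[OF as(1)] polynomial_incl unfolding q_def by auto
  have length_q: "length q \<le> card D"
    using length_linear_factors[OF as(1)] as(3) D \<open>j \<in> D\<close> unfolding q_def
    by (metis One_nat_def Suc_pred card_gt_0_iff empty_iff)
  have eval_q: "eval q (pt i) = \<zero> \<longleftrightarrow> i \<noteq> j" if "i \<in> D" for i
  proof -
    have "pt i \<in> set as \<longleftrightarrow> i \<in> D - {j}"
      unfolding as(2) using inj_on_image_mem_iff[OF D(2) that, of "D - {j}"] by blast
    thus ?thesis using eval_linear_factors_eq_zero_iff[OF as(1), of "pt i"] that D(3)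
      unfolding q_def by auto
  qed
  define c where "c = eval q (pt j)"
  have c: "c \<in> Units R"
    using eval_q[OF \<open>j \<in> D\<close>] eval_in_carrier[OF q] D \<open>j \<in> D\<close> field_Units unfolding c_def by auto
  define l where "l = (\<lambda>a. coeff q a \<otimes> inv c)"
  have "eval_coeffs l (card D) (pt i) = (if i = j then \<one> else \<zero>)" if "i \<in> D" for i
  proof -
    have "eval_coeffs l (card D) (pt i) = eval q (pt i) \<otimes> inv c"
      unfolding l_def using q c that D eval_eq_eval_coeffs[OF q _ length_q]
      by (subst eval_coeffs_mult_const) auto
    thus ?thesis using eval_q[OF that] c by (cases "i = j") (auto simp: c_def)
  qed
  moreover have "\<forall>a. l a \<in> carrier R" unfolding l_def using q c by auto
  ultimately show ?thesis by blast
qed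

lemma lagrange_interpolation:
  assumes D: "finite D" "inj_on pt D" "pt ` D \<subseteq> carrier R"
  shows "\<exists>L. (\<forall>j a. L j a \<in> carrier R) \<and>
           (\<forall>g. (\<forall>a. g a \<in> carrier R) \<longrightarrow>
              (\<forall>b < card D. (\<Oplus>j\<in>D. L j b \<otimes> eval_coeffs g (card D) (pt j)) = g b))"
proof -
  have "\<forall>j\<in>D. \<exists>l. (\<forall>a. l a \<in> carrier R) \<and>
           (\<forall>i\<in>D. eval_coeffs l (card D) (pt i) = (if i = j then \<one> else \<zero>))"
    using lagrange_basis[OF D] by blast
  then obtain l where l: "\<And>j a. j \<in> D \<Longrightarrow> l j a \<in> carrier R"
    "\<And>i j. i \<in> D \<Longrightarrow> j \<in> D \<Longrightarrow> eval_coeffs (l j) (card D) (pt i) = (if i = j then \<one> else \<zero>)"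
    by metis
  define L where "L = (\<lambda>j a. if j \<in> D then l j a else \<zero>)"
  have L: "L j a \<in> carrier R" for j a unfolding L_def using l by auto
  have "(\<Oplus>j\<in>D. L j b \<otimes> eval_coeffs g (card D) (pt j)) = g b"
    if g: "\<forall>a. g a \<in> carrier R" and "b < card D" for g b
  proof -
    define y where "y = (\<lambda>j. eval_coeffs g (card D) (pt j))"
    have y: "y j \<in> carrier R" if "j \<in> D" for j
      unfolding y_def using g D that by (auto intro: eval_coeffs_closed)
    define Q where "Q = (\<lambda>a. \<Oplus>j\<in>D. L j a \<otimes> y j)"
    have agree: "eval_coeffs Q (card D) (pt i) = eval_coeffs g (card D) (pt i)" if i: "i \<in> D" for i
    proof -
      have "eval_coeffs Q (card D) (pt i) = (\<Oplus>j\<in>D. eval_coeffs (L j) (card D) (pt i) \<otimes> y j)"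
        unfolding Q_def using L y D i by (intro eval_coeffs_finsum) auto
      also have "\<dots> = (\<Oplus>j\<in>D. if j = i then y j else \<zero>)"
        using l y i unfolding L_def by (intro finsum_cong') auto
      also have "\<dots> = y i" using i D y by (intro add.finprod_singleton_swap) auto
      finally show ?thesis unfolding y_def .
    qed
    have "Q b = g b"
    proof (rule eval_coeffs_agree_imp_eq[of Q g "pt ` D" "card D" "card D"])
      show "Q a \<in> carrier R" for a unfolding Q_def using L y D by (intro finsum_closed) auto
      show "card D \<le> card (pt ` D)" using D card_image by fastforce
      show "\<And>x. x \<in> pt ` D \<Longrightarrow> eval_coeffs Q (card D) x = eval_coeffs g (card D) x"
        using agree by blast
    qed (use D g \<open>b < card D\<close> in simp_all)
    thus ?thesis unfolding Q_def y_def .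
  qed
  thus ?thesis using L by blast
qed

lemma interpolation_with_top_coeff:
  assumes D: "finite D" "inj_on pt D" "pt ` D \<subseteq> carrier R" "card D = d"
  shows "\<exists>lam mu. (\<forall>j b. lam j b \<in> carrier R) \<and> (\<forall>b. mu b \<in> carrier R) \<and>
     (\<forall>g. (\<forall>a. g a \<in> carrier R) \<longrightarrow>
        (\<forall>b\<le>d. (\<Oplus>j\<in>D. lam j b \<otimes> eval_coeffs g (Suc d) (pt j)) \<oplus> mu b \<otimes> g d = g b))"
proof -
  obtain L where L: "\<And>j a. L j a \<in> carrier R"
    and interp: "\<And>g b. \<forall>a. g a \<in> carrier R \<Longrightarrow> b < d \<Longrightarrow>
                   (\<Oplus>j\<in>D. L j b \<otimes> eval_coeffs g d (pt j)) = g b"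
    using lagrange_interpolation[OF D(1-3)] D(4) by blast
  have pt: "\<And>j. j \<in> D \<Longrightarrow> pt j \<in> carrier R" using D by auto
  define top where "top = (\<lambda>b. \<Oplus>j\<in>D. L j b \<otimes> pt j [^] d)"
  have top: "top b \<in> carrier R" for b unfolding top_def using L pt D by (intro finsum_closed) auto
  define lam where "lam = (\<lambda>j b. if b < d then L j b else \<zero>)"
  \<comment> \<open>The evaluations at pt j also carry the top term g d \<otimes> pt j [^] d, which mu cancels.\<close>
  define mu where "mu = (\<lambda>b. if b < d then \<ominus> top b else \<one>)"
  have "(\<Oplus>j\<in>D. lam j b \<otimes> eval_coeffs g (Suc d) (pt j)) \<oplus> mu b \<otimes> g d = g b"
    if g: "\<forall>a. g a \<in> carrier R" and "b \<le> d" for g b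
  proof (cases "b = d")
    case True
    have "(\<Oplus>j\<in>D. lam j b \<otimes> eval_coeffs g (Suc d) (pt j)) = (\<Oplus>j\<in>D. \<zero>)"
      using True g pt by (intro finsum_cong') (auto simp: lam_def eval_coeffs_closed)
    thus ?thesis using True g by (simp add: mu_def)
  next
    case False
    hence "b < d" using \<open>b \<le> d\<close> by simp
    hence "(\<Oplus>j\<in>D. lam j b \<otimes> eval_coeffs g (Suc d) (pt j)) = top b \<otimes> g d \<oplus> g b"
      using finsum_eval_coeffs_Suc[OF D(1), of "\<lambda>j. L j b" pt g d] L pt g interp[OF g]
      unfolding lam_def top_def by simp
    moreover have "top b \<otimes> g d \<oplus> g b \<oplus> \<ominus> top b \<otimes> g d = g b"
      using top[of b] g by algebra
    ultimately show ?thesis using \<open>b < d\<close> unfolding mu_def by simp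
  qed
  moreover have "\<forall>j b. lam j b \<in> carrier R" "\<forall>b. mu b \<in> carrier R"
    unfolding lam_def mu_def using L top by auto
  ultimately show ?thesis by blast
qed

end

lemma div_mod_mult_add: "(b::nat) < m \<Longrightarrow> (s * m + b) div m = s \<and> (s * m + b) mod m = b"
  by (simp add: add.commute)

context ring begin

lemma finsum_if_div_eq:
  fixes s m q :: nat
  assumes "s < q" and H: "\<And>r. H r \<in> carrier R"
  shows "(\<Oplus>r\<in>{..<m * q}. if r div m = s then H r else \<zero>) = (\<Oplus>b\<in>{..<m}. H (s * m + b))"
proof -
  have block: "(\<lambda>b. s * m + b) ` {..<m} \<subseteq> {..<m * q}"
  proof
    fix r assume "r \<in> (\<lambda>b. s * m + b) ` {..<m}"
    then obtain b where "b < m" "r = s * m + b" by auto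
    moreover have "Suc s * m \<le> q * m" using \<open>s < q\<close> by (intro mult_le_mono1) simp
    ultimately show "r \<in> {..<m * q}" by (simp add: mult.commute)
  qed
  have outside: "r div m \<noteq> s" if "r \<notin> (\<lambda>b. s * m + b) ` {..<m}" "r < m * q" for r
  proof
    assume "r div m = s"
    moreover have "r mod m < m" using that(2) by (cases "m = 0") auto
    ultimately have "r \<in> (\<lambda>b. s * m + b) ` {..<m}"
      using div_mult_mod_eq[of r m] by (metis image_eqI lessThan_iff mult.commute)
    thus False using that(1) by blast
  qed
  have "(\<Oplus>r\<in>(\<lambda>b. s * m + b) ` {..<m}. H r) = (\<Oplus>r\<in>{..<m * q}. if r div m = s then H r else \<zero>)"
  proof (rule add.finprod_mono_neutral_cong_left[OF _ block])
    show "\<And>r. r \<in> (\<lambda>b. s * m + b) ` {..<m} \<Longrightarrow> H r = (if r div m = s then H r else \<zero>)"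
      by auto
  qed (use outside H in auto)
  hence "(\<Oplus>r\<in>{..<m * q}. if r div m = s then H r else \<zero>) = (\<Oplus>r\<in>(\<lambda>b. s * m + b) ` {..<m}. H r)"
    by simp
  also have "\<dots> = (\<Oplus>b\<in>{..<m}. H (s * m + b))"
    using H by (subst finsum_reindex) (auto simp: inj_on_def)
  finally show ?thesis .
qed

lemma finsum_select:
  assumes "s0 \<in> A" "finite A" "\<And>s. s \<in> A \<Longrightarrow> f s \<in> carrier R" "c \<in> carrier R"
  shows "(\<Oplus>s\<in>A. (if s = s0 then c else \<zero>) \<otimes> f s) = c \<otimes> f s0"
proof -
  have "(\<Oplus>s\<in>A. (if s = s0 then c else \<zero>) \<otimes> f s) = (\<Oplus>s\<in>A. if s = s0 then c \<otimes> f s else \<zero>)"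
    using assms by (intro finsum_cong') auto
  also have "\<dots> = c \<otimes> f s0" using assms by (intro add.finprod_singleton_swap) auto
  finally show ?thesis .
qed

lemma repair_node_cong:
  assumes co: "coeffs_ok R \<alpha> \<alpha>' \<beta> D co" and "finite D" and "t < \<alpha>"
    and eq: "\<And>j r. j \<in> D \<Longrightarrow> r < \<alpha> \<Longrightarrow> N j r c = N' j r c"
    and closed: "\<And>j r. j \<in> D \<Longrightarrow> r < \<alpha> \<Longrightarrow> N' j r c \<in> carrier R"
  shows "repair_node R \<alpha> \<alpha>' \<beta> N Rp D co t c = repair_node R \<alpha> \<alpha>' \<beta> N' Rp D co t c"
proof -
  have hB: "\<And>j s r. j \<in> D \<Longrightarrow> s < \<beta> \<Longrightarrow> r < \<alpha> \<Longrightarrow> hB co j s r \<in> carrier R"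
    and hC: "\<And>j s. j \<in> D \<Longrightarrow> s < \<beta> \<Longrightarrow> hC co t j s \<in> carrier R"
    using co \<open>t < \<alpha>\<close> unfolding coeffs_ok_def by auto
  have packet: "(\<Oplus>r\<in>{..<\<alpha>}. hB co j s r \<otimes> N j r c) = (\<Oplus>r\<in>{..<\<alpha>}. hB co j s r \<otimes> N' j r c)"
    and packet_closed: "(\<Oplus>r\<in>{..<\<alpha>}. hB co j s r \<otimes> N' j r c) \<in> carrier R"
    if "j \<in> D" "s < \<beta>" for j s
    using that hB eq closed by (auto intro!: finsum_cong' finsum_closed)
  have "(\<Oplus>s\<in>{..<\<beta>}. hC co t j s \<otimes> (\<Oplus>r\<in>{..<\<alpha>}. hB co j s r \<otimes> N j r c))
      = (\<Oplus>s\<in>{..<\<beta>}. hC co t j s \<otimes> (\<Oplus>r\<in>{..<\<alpha>}. hB co j s r \<otimes> N' j r c))" if "j \<in> D" for j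
    using that packet packet_closed hC by (intro finsum_cong') auto
  thus ?thesis
    unfolding repair_node_def using packet_closed hC \<open>finite D\<close>
    by (subst finsum_cong'[OF refl]) (auto intro!: finsum_closed)
qed

lemma recovers_cong:
  assumes eq: "\<And>i r c. i \<in> K \<Longrightarrow> r < \<alpha> \<Longrightarrow> c < M \<Longrightarrow> N i r c = N' i r c"
    and closed: "\<And>i. i \<in> K \<Longrightarrow> is_mat R \<alpha> M (N' i)"
    and "recovers R M \<alpha> N' K"
  shows "recovers R M \<alpha> N K"
proof -
  have "stored R M (N i) r x = stored R M (N' i) r x" if "is_vec R M x" "i \<in> K" "r < \<alpha>" for x i r
    unfolding stored_def using that eq closed by (intro finsum_cong') (auto simp: is_vec_def is_mat_def)
  thus ?thesis using \<open>recovers R M \<alpha> N' K\<close> unfolding recovers_def by metis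
qed

end

definition message_index :: "nat \<Rightarrow> nat \<Rightarrow> nat \<Rightarrow> (nat \<times> nat \<times> nat) set" where
  "message_index \<beta> k d = {(s, a, b). s < \<beta> \<and> a \<le> b \<and> b \<le> d \<and> a < k}"

lemma card_triangle:
  fixes d k :: nat
  assumes "k \<le> Suc d"
  shows "2 * card {(a, b). a \<le> b \<and> b \<le> d \<and> a < k} + k * k = k * (2 * d + 3)"
  using assms
proof (induction k)
  case 0 thus ?case by simp
next
  case (Suc k)
  let ?T = "{(a, b). a \<le> b \<and> b \<le> d \<and> a < k}"
  have "{(a, b). a \<le> b \<and> b \<le> d \<and> a < Suc k} = ?T \<union> ({k} \<times> {k..d})"
    by auto
  moreover have "finite ?T" by (rule finite_subset[of _ "{..<k} \<times> {..d}"]) auto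
  moreover have "?T \<inter> ({k} \<times> {k..d}) = {}" by auto
  ultimately have "card {(a, b). a \<le> b \<and> b \<le> d \<and> a < Suc k} = card ?T + (Suc d - k)"
    by (simp add: card_Un_disjoint card_cartesian_product)
  thus ?case using Suc by (simp add: algebra_simps)
qed

lemma card_message_index:
  assumes "k \<le> d"
  shows "2 * card (message_index \<beta> k d) = \<beta> * (k * (2 * d - k + 3))"
proof -
  let ?T = "{(a, b). a \<le> b \<and> b \<le> d \<and> a < k}"
  have "2 * d - k + 3 + k = 2 * d + 3" using assms by simp
  hence "k * (2 * d + 3) = k * (2 * d - k + 3) + k * k" by (metis add_mult_distrib2)
  hence "2 * card ?T = k * (2 * d - k + 3)" using card_triangle[of k d] assms by simp
  moreover have "message_index \<beta> k d = {..<\<beta>} \<times> ?T" unfolding message_index_def by auto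
  ultimately show ?thesis by (simp add: card_cartesian_product)
qed

locale product_matrix_code = field +
  fixes n k d M \<beta> :: nat and pt :: "nat \<Rightarrow> 'a" and \<phi> :: "nat \<Rightarrow> nat \<times> nat \<times> nat"
  assumes k_le_d: "k \<le> d"
    and pt_inj: "inj_on pt {..<n}" and pt_closed: "\<And>i. i < n \<Longrightarrow> pt i \<in> carrier R"
    and \<phi>_inj: "inj_on \<phi> {..<M}" and \<phi>_range: "\<phi> ` {..<M} \<subseteq> message_index \<beta> k d"
begin

lemma \<phi>_cases: "c < M \<Longrightarrow> \<phi> c = (s, a, b) \<Longrightarrow> s < \<beta> \<and> a \<le> b \<and> b \<le> d \<and> a < k"
  using \<phi>_range unfolding message_index_def by auto

definition msg_coeff :: "nat \<Rightarrow> nat \<Rightarrow> nat \<Rightarrow> nat \<Rightarrow> 'a" where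
  "msg_coeff c s a b = (if \<phi> c = (s, min a b, max a b) then \<one> else \<zero>)"

definition msg_entry :: "(nat \<Rightarrow> 'a) \<Rightarrow> nat \<Rightarrow> nat \<Rightarrow> nat \<Rightarrow> 'a" where
  "msg_entry x s a b = (\<Oplus>c\<in>{..<M}. msg_coeff c s a b \<otimes> x c)"

text \<open>With \<psi>_f = (1, pt f, ..., pt f ^ d), node_entry f c s b is the coefficient of symbol c
  in the b-th entry of \<psi>_f^T X_s. Complete node i stores \<psi>_i^T X_s for all s, its packet r
  being entry r mod (d+1) of block r div (d+1); the repairing node stores the last columns
  X_s(a, d), a < k, which contain all nonzero entries of those columns.\<close>

definition node_entry :: "nat \<Rightarrow> nat \<Rightarrow> nat \<Rightarrow> nat \<Rightarrow> 'a" where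
  "node_entry f c s b = eval_coeffs (\<lambda>a. msg_coeff c s a b) (Suc d) (pt f)"

definition node_code :: "nat \<Rightarrow> nat \<Rightarrow> nat \<Rightarrow> 'a" where
  "node_code i r c = node_entry i c (r div Suc d) (r mod Suc d)"

definition repairer_code :: "nat \<Rightarrow> nat \<Rightarrow> 'a" where
  "repairer_code r c = msg_coeff c (r div k) (r mod k) d"

lemma msg_coeff_closed [simp]: "msg_coeff c s a b \<in> carrier R"
  unfolding msg_coeff_def by auto

lemma msg_coeff_sym: "msg_coeff c s a b = msg_coeff c s b a"
  unfolding msg_coeff_def by (simp add: min.commute max.commute)

lemma msg_coeff_eq_zero:
  assumes "c < M" "k \<le> a" "k \<le> b"
  shows "msg_coeff c s a b = \<zero>"
proof -
  obtain s' a' b' where \<phi>_c: "\<phi> c = (s', a', b')" by (cases "\<phi> c")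
  hence "a' < k" using \<phi>_cases[OF assms(1)] by blast
  thus ?thesis using \<phi>_c assms(2,3) unfolding msg_coeff_def by auto
qed

lemma node_entry_closed: "f < n \<Longrightarrow> node_entry f c s b \<in> carrier R"
  unfolding node_entry_def using pt_closed by (intro eval_coeffs_closed) auto

lemma node_code_closed: "i < n \<Longrightarrow> node_code i r c \<in> carrier R"
  unfolding node_code_def by (rule node_entry_closed)

lemma msg_entry_closed: "is_vec R M x \<Longrightarrow> msg_entry x s a b \<in> carrier R"
  unfolding msg_entry_def is_vec_def by (intro finsum_closed) auto

lemma msg_entry_sym: "msg_entry x s a b = msg_entry x s b a"
  unfolding msg_entry_def by (simp add: msg_coeff_sym)

lemma msg_entry_eq_zero:
  assumes "is_vec R M x" "k \<le> a" "k \<le> b"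
  shows "msg_entry x s a b = \<zero>"
proof -
  have "msg_entry x s a b = (\<Oplus>c\<in>{..<M}. \<zero>)"
    unfolding msg_entry_def using assms by (intro finsum_cong') (auto simp: msg_coeff_eq_zero is_vec_def)
  thus ?thesis by simp
qed

lemma msg_entry_\<phi>:
  assumes x: "is_vec R M x" and "c0 < M" and "\<phi> c0 = (s, a, b)"
  shows "msg_entry x s a b = x c0"
proof -
  have "msg_coeff c s a b \<otimes> x c = (if c = c0 then x c else \<zero>)" if "c < M" for c
  proof -
    have "a \<le> b" using \<phi>_cases[OF assms(2,3)] by blast
    moreover have "\<phi> c = \<phi> c0 \<longleftrightarrow> c = c0" using \<phi>_inj that assms(2) by (auto simp: inj_on_def)
    ultimately have "msg_coeff c s a b = (if c = c0 then \<one> else \<zero>)"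
      using assms(3) unfolding msg_coeff_def by auto
    thus ?thesis using x that unfolding is_vec_def by simp
  qed
  hence "msg_entry x s a b = (\<Oplus>c\<in>{..<M}. if c = c0 then x c else \<zero>)"
    unfolding msg_entry_def using x by (intro finsum_cong') (auto simp: is_vec_def)
  also have "\<dots> = x c0" using x assms(2) by (intro add.finprod_singleton_swap) (auto simp: is_vec_def)
  finally show ?thesis .
qed

lemma stored_node_code:
  assumes x: "is_vec R M x" and "i < n"
  shows "stored R M (node_code i) r x = eval_coeffs (\<lambda>a. msg_entry x (r div Suc d) a (r mod Suc d)) (Suc d) (pt i)"
  unfolding stored_def node_code_def node_entry_def msg_entry_def
  using eval_coeffs_finsum[of "{..<M}" "\<lambda>c a. msg_coeff c (r div Suc d) a (r mod Suc d)" x "pt i"]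
    x pt_closed[OF \<open>i < n\<close>] by (simp add: is_vec_def)

lemma recovers_node_code:
  assumes K: "K \<subseteq> {..<n}" "card K = k"
  shows "recovers R M (Suc d * \<beta>) node_code K"
  unfolding recovers_def
proof (intro allI impI)
  fix x y c assume x: "is_vec R M x" and y: "is_vec R M y"
    and same: "\<forall>i\<in>K. \<forall>r<Suc d * \<beta>. stored R M (node_code i) r x = stored R M (node_code i) r y"
    and "c < M"
  have seen: "eval_coeffs (\<lambda>a. msg_entry x s a b) (Suc d) z = eval_coeffs (\<lambda>a. msg_entry y s a b) (Suc d) z"
    if "s < \<beta>" "b < Suc d" "z \<in> pt ` K" for s b z
  proof -
    obtain i where i: "i \<in> K" "z = pt i" using \<open>z \<in> pt ` K\<close> by auto
    define r where "r = s * Suc d + b"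
    have "Suc s * Suc d \<le> \<beta> * Suc d" using \<open>s < \<beta>\<close> by (intro mult_le_mono1) simp
    hence "r < Suc d * \<beta>" unfolding r_def using \<open>b < Suc d\<close> by (simp add: mult.commute)
    moreover have "r div Suc d = s" "r mod Suc d = b"
      unfolding r_def using div_mod_mult_add[OF \<open>b < Suc d\<close>] by simp_all
    moreover have "i < n" using K i by auto
    ultimately show ?thesis
      using same i stored_node_code[OF x, of i r] stored_node_code[OF y, of i r] by simp
  qed
  have points: "pt ` K \<subseteq> carrier R" "finite (pt ` K)" "k \<le> card (pt ` K)"
  proof -
    show "pt ` K \<subseteq> carrier R" using K pt_closed by auto
    show "finite (pt ` K)" using finite_subset[OF K(1)] by simp
    show "k \<le> card (pt ` K)" using card_image[OF inj_on_subset[OF pt_inj K(1)]] K(2) by simp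
  qed
  have high_column: "msg_entry x s a b = msg_entry y s a b"
    if "s < \<beta>" "k \<le> b" "b < Suc d" "a < Suc d" for s a b
  proof (rule eval_coeffs_agree_imp_eq[of "\<lambda>a. msg_entry x s a b" "\<lambda>a. msg_entry y s a b" "pt ` K" k "Suc d"])
    show "\<And>a. k \<le> a \<Longrightarrow> a < Suc d \<Longrightarrow> msg_entry x s a b = msg_entry y s a b"
      using msg_entry_eq_zero[OF x] msg_entry_eq_zero[OF y] \<open>k \<le> b\<close> by simp
  qed (use msg_entry_closed[OF x] msg_entry_closed[OF y] points seen that in auto)
  have all_entries: "msg_entry x s a b = msg_entry y s a b"
    if "s < \<beta>" "b < Suc d" "a < Suc d" for s a b
  proof (rule eval_coeffs_agree_imp_eq[of "\<lambda>a. msg_entry x s a b" "\<lambda>a. msg_entry y s a b" "pt ` K" k "Suc d"])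
    show "\<And>a. k \<le> a \<Longrightarrow> a < Suc d \<Longrightarrow> msg_entry x s a b = msg_entry y s a b"
      using high_column[OF \<open>s < \<beta>\<close> _ _ \<open>b < Suc d\<close>] msg_entry_sym by metis
  qed (use msg_entry_closed[OF x] msg_entry_closed[OF y] points seen that in auto)
  obtain s a b where \<phi>_c: "\<phi> c = (s, a, b)" by (cases "\<phi> c")
  hence "s < \<beta>" "a < Suc d" "b < Suc d" using \<phi>_cases[OF \<open>c < M\<close>] by auto
  thus "x c = y c"
    using all_entries msg_entry_\<phi>[OF x \<open>c < M\<close> \<phi>_c] msg_entry_\<phi>[OF y \<open>c < M\<close> \<phi>_c] by metis
qed

definition exact_repair_coeffs :: "nat \<Rightarrow> (nat \<Rightarrow> nat \<Rightarrow> 'a) \<Rightarrow> (nat \<Rightarrow> 'a) \<Rightarrow> 'a repair_coeffs" where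
  "exact_repair_coeffs f lam mu =
     \<lparr>hB = (\<lambda>j s r. if r div Suc d = s then pt f [^] (r mod Suc d) else \<zero>),
      rB = (\<lambda>s r. if r div k = s then pt f [^] (r mod k) else \<zero>),
      hC = (\<lambda>t j s. if s = t div Suc d then lam j (t mod Suc d) else \<zero>),
      rC = (\<lambda>t s. if s = t div Suc d then mu (t mod Suc d) else \<zero>)\<rparr>"

lemma helper_packet:
  assumes "f < n" "j < n" "s < \<beta>"
  shows "(\<Oplus>r\<in>{..<Suc d * \<beta>}. hB (exact_repair_coeffs f lam mu) j s r \<otimes> node_code j r c)
       = eval_coeffs (node_entry f c s) (Suc d) (pt j)"
proof -
  have pf: "pt f \<in> carrier R" and pj: "pt j \<in> carrier R" using pt_closed assms by auto
  have "(\<Oplus>r\<in>{..<Suc d * \<beta>}. hB (exact_repair_coeffs f lam mu) j s r \<otimes> node_code j r c)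
      = (\<Oplus>r\<in>{..<Suc d * \<beta>}. if r div Suc d = s then pt f [^] (r mod Suc d) \<otimes> node_code j r c else \<zero>)"
    unfolding exact_repair_coeffs_def using pf node_code_closed[OF \<open>j < n\<close>] by (intro finsum_cong') auto
  also have "\<dots> = (\<Oplus>b\<in>{..<Suc d}. node_entry j c s b \<otimes> pt f [^] b)"
  proof -
    have "(s * Suc d + b) div Suc d = s" "(s * Suc d + b) mod Suc d = b" if "b < Suc d" for b
      using div_mod_mult_add[OF that] by simp_all
    thus ?thesis
      using pf node_code_closed[OF \<open>j < n\<close>] node_entry_closed[OF \<open>j < n\<close>]
      by (subst finsum_if_div_eq[OF \<open>s < \<beta>\<close>]) (auto intro!: finsum_cong' simp: node_code_def m_comm)
  qed
  also have "\<dots> = eval_coeffs (\<lambda>a. \<Oplus>b\<in>{..<Suc d}. msg_coeff c s a b \<otimes> pt f [^] b) (Suc d) (pt j)"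
    unfolding node_entry_def using pf pj by (intro eval_coeffs_finsum[symmetric]) auto
  also have "(\<lambda>a. \<Oplus>b\<in>{..<Suc d}. msg_coeff c s a b \<otimes> pt f [^] b) = node_entry f c s"
    unfolding node_entry_def eval_coeffs_def by (intro ext) (simp only: msg_coeff_sym)
  finally show ?thesis .
qed

lemma repairer_packet:
  assumes "f < n" "s < \<beta>" "c < M"
  shows "(\<Oplus>r\<in>{..<k * \<beta>}. rB (exact_repair_coeffs f lam mu) s r \<otimes> repairer_code r c) = node_entry f c s d"
proof -
  have pf: "pt f \<in> carrier R" using pt_closed assms by auto
  have "(\<Oplus>r\<in>{..<k * \<beta>}. rB (exact_repair_coeffs f lam mu) s r \<otimes> repairer_code r c)
      = (\<Oplus>r\<in>{..<k * \<beta>}. if r div k = s then pt f [^] (r mod k) \<otimes> repairer_code r c else \<zero>)"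
    unfolding exact_repair_coeffs_def repairer_code_def using pf by (intro finsum_cong') auto
  also have "\<dots> = (\<Oplus>a\<in>{..<k}. msg_coeff c s a d \<otimes> pt f [^] a)"
  proof -
    have "(s * k + a) div k = s" "(s * k + a) mod k = a" if "a < k" for a
      using div_mod_mult_add[OF that] by simp_all
    thus ?thesis
      using pf by (subst finsum_if_div_eq[OF \<open>s < \<beta>\<close>])
        (auto intro!: finsum_cong' simp: repairer_code_def m_comm)
  qed
  also have "\<dots> = node_entry f c s d"
    unfolding node_entry_def eval_coeffs_def
  proof (rule add.finprod_mono_neutral_cong_left)
    show "{..<k} \<subseteq> {..<Suc d}" using k_le_d by auto
    show "\<And>a. a \<in> {..<Suc d} - {..<k} \<Longrightarrow> msg_coeff c s a d \<otimes> pt f [^] a = \<zero>"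
      using msg_coeff_eq_zero[OF \<open>c < M\<close> _ k_le_d] pf by simp
  qed (use pf in auto)
  finally show ?thesis .
qed

lemma repair_node_exact_repair_coeffs:
  assumes "f < n" "D \<subseteq> {..<n}" "c < M" "s < \<beta>" and t: "t div Suc d = s" "t mod Suc d = b"
    and lam: "\<forall>j b. lam j b \<in> carrier R" and mu: "\<forall>b. mu b \<in> carrier R"
  shows "repair_node R (Suc d * \<beta>) (k * \<beta>) \<beta> node_code repairer_code D (exact_repair_coeffs f lam mu) t c
       = (\<Oplus>j\<in>D. lam j b \<otimes> eval_coeffs (node_entry f c s) (Suc d) (pt j)) \<oplus> mu b \<otimes> node_entry f c s d"
proof -
  let ?co = "exact_repair_coeffs f lam mu"
  have entry: "\<And>s a. node_entry f c s a \<in> carrier R" using node_entry_closed[OF \<open>f < n\<close>] .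
  have helper_value: "\<And>s j. j \<in> D \<Longrightarrow> eval_coeffs (node_entry f c s) (Suc d) (pt j) \<in> carrier R"
    using entry pt_closed \<open>D \<subseteq> {..<n}\<close> by (intro eval_coeffs_closed) auto
  from t have hC: "hC ?co t j s' = (if s' = s then lam j b else \<zero>)"
    and rC: "rC ?co t s' = (if s' = s then mu b else \<zero>)" for j s'
    by (simp_all add: exact_repair_coeffs_def)
  have "(\<Oplus>s'\<in>{..<\<beta>}. hC ?co t j s' \<otimes> (\<Oplus>r\<in>{..<Suc d * \<beta>}. hB ?co j s' r \<otimes> node_code j r c))
      = lam j b \<otimes> eval_coeffs (node_entry f c s) (Suc d) (pt j)" if "j \<in> D" for j
  proof -
    have "j < n" using that \<open>D \<subseteq> {..<n}\<close> by auto
    have "(\<Oplus>s'\<in>{..<\<beta>}. hC ?co t j s' \<otimes> (\<Oplus>r\<in>{..<Suc d * \<beta>}. hB ?co j s' r \<otimes> node_code j r c))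
        = (\<Oplus>s'\<in>{..<\<beta>}. (if s' = s then lam j b else \<zero>) \<otimes> eval_coeffs (node_entry f c s') (Suc d) (pt j))"
      using helper_packet[OF \<open>f < n\<close> \<open>j < n\<close>] helper_value[OF that] lam
      by (intro finsum_cong') (simp_all add: hC)
    also have "\<dots> = lam j b \<otimes> eval_coeffs (node_entry f c s) (Suc d) (pt j)"
      using \<open>s < \<beta>\<close> helper_value[OF that] lam by (intro finsum_select) auto
    finally show ?thesis .
  qed
  hence "(\<Oplus>j\<in>D. \<Oplus>s'\<in>{..<\<beta>}. hC ?co t j s' \<otimes> (\<Oplus>r\<in>{..<Suc d * \<beta>}. hB ?co j s' r \<otimes> node_code j r c))
      = (\<Oplus>j\<in>D. lam j b \<otimes> eval_coeffs (node_entry f c s) (Suc d) (pt j))"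
    using helper_value lam by (intro finsum_cong') auto
  moreover have "(\<Oplus>s'\<in>{..<\<beta>}. rC ?co t s' \<otimes> (\<Oplus>r\<in>{..<k * \<beta>}. rB ?co s' r \<otimes> repairer_code r c))
      = (\<Oplus>s'\<in>{..<\<beta>}. (if s' = s then mu b else \<zero>) \<otimes> node_entry f c s' d)"
    using repairer_packet[OF \<open>f < n\<close> _ \<open>c < M\<close>] entry mu by (intro finsum_cong') (simp_all add: rC)
  moreover have "\<dots> = mu b \<otimes> node_entry f c s d"
    using \<open>s < \<beta>\<close> entry mu by (intro finsum_select) auto
  ultimately show ?thesis unfolding repair_node_def by simp
qed

lemma repair_node_exact:
  assumes "f < n" "D \<subseteq> {..<n}" "c < M" "t < Suc d * \<beta>"
    and lam: "\<forall>j b. lam j b \<in> carrier R" and mu: "\<forall>b. mu b \<in> carrier R"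
    and interpolation: "\<forall>g. (\<forall>a. g a \<in> carrier R) \<longrightarrow>
        (\<forall>b\<le>d. (\<Oplus>j\<in>D. lam j b \<otimes> eval_coeffs g (Suc d) (pt j)) \<oplus> mu b \<otimes> g d = g b)"
  shows "repair_node R (Suc d * \<beta>) (k * \<beta>) \<beta> node_code repairer_code D (exact_repair_coeffs f lam mu) t c
       = node_code f t c"
proof -
  define s where "s = t div Suc d"
  define b where "b = t mod Suc d"
  have "s < \<beta>" unfolding s_def using \<open>t < Suc d * \<beta>\<close> by (simp add: less_mult_imp_div_less mult.commute)
  hence "repair_node R (Suc d * \<beta>) (k * \<beta>) \<beta> node_code repairer_code D (exact_repair_coeffs f lam mu) t c
      = (\<Oplus>j\<in>D. lam j b \<otimes> eval_coeffs (node_entry f c s) (Suc d) (pt j)) \<oplus> mu b \<otimes> node_entry f c s d"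
    using repair_node_exact_repair_coeffs[OF assms(1-3) _ s_def[symmetric] b_def[symmetric] lam mu] by blast
  also have "\<dots> = node_entry f c s b"
    using interpolation node_entry_closed[OF \<open>f < n\<close>] unfolding b_def by (simp add: less_Suc_eq_le)
  finally show ?thesis unfolding node_code_def s_def b_def .
qed

definition exact_repair :: "event list \<Rightarrow> event \<Rightarrow> 'a repair_coeffs" where
  "exact_repair es e = (SOME co. coeffs_ok R (Suc d * \<beta>) (k * \<beta>) \<beta> (snd e) co \<and>
      (\<forall>t<Suc d * \<beta>. \<forall>c<M.
         repair_node R (Suc d * \<beta>) (k * \<beta>) \<beta> node_code repairer_code (snd e) co t c = node_code (fst e) t c))"

lemma exact_repair_spec:
  assumes "valid_event n d e"
  shows "coeffs_ok R (Suc d * \<beta>) (k * \<beta>) \<beta> (snd e) (exact_repair es e) \<and>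
      (\<forall>t<Suc d * \<beta>. \<forall>c<M. repair_node R (Suc d * \<beta>) (k * \<beta>) \<beta> node_code repairer_code (snd e)
          (exact_repair es e) t c = node_code (fst e) t c)"
proof -
  obtain f D where e: "e = (f, D)" by (cases e)
  have "f < n" and D: "D \<subseteq> {..<n}" "card D = d" using assms unfolding valid_event_def e by auto
  have "finite D" using D(1) finite_subset by blast
  moreover have "pt ` D \<subseteq> carrier R" using D(1) pt_closed by auto
  ultimately obtain lam mu where lam: "\<forall>j b. lam j b \<in> carrier R" and mu: "\<forall>b. mu b \<in> carrier R"
    and interpolation: "\<forall>g. (\<forall>a. g a \<in> carrier R) \<longrightarrow>
        (\<forall>b\<le>d. (\<Oplus>j\<in>D. lam j b \<otimes> eval_coeffs g (Suc d) (pt j)) \<oplus> mu b \<otimes> g d = g b)"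
    using interpolation_with_top_coeff[OF _ inj_on_subset[OF pt_inj D(1)] _ D(2)] by blast
  have "coeffs_ok R (Suc d * \<beta>) (k * \<beta>) \<beta> D (exact_repair_coeffs f lam mu)"
    using lam mu pt_closed[OF \<open>f < n\<close>] by (simp add: coeffs_ok_def exact_repair_coeffs_def)
  moreover have "\<forall>t<Suc d * \<beta>. \<forall>c<M. repair_node R (Suc d * \<beta>) (k * \<beta>) \<beta> node_code repairer_code D
          (exact_repair_coeffs f lam mu) t c = node_code f t c"
    using repair_node_exact[OF \<open>f < n\<close> D(1) _ _ lam mu interpolation] by blast
  ultimately show ?thesis unfolding exact_repair_def e fst_conv snd_conv by - (rule someI, rule conjI)
qed

lemma run_rev_exact_repair:
  assumes "list_all (valid_event n d) es" "i < n" "r < Suc d * \<beta>" "c < M"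
  shows "run_rev R (Suc d * \<beta>) (k * \<beta>) \<beta> node_code repairer_code exact_repair es i r c = node_code i r c"
  using assms
proof (induction es arbitrary: i r)
  case Nil thus ?case by simp
next
  case (Cons e es)
  let ?N = "run_rev R (Suc d * \<beta>) (k * \<beta>) \<beta> node_code repairer_code exact_repair es"
  have e: "valid_event n d e" and es: "list_all (valid_event n d) es" using Cons.prems by auto
  hence D: "snd e \<subseteq> {..<n}" unfolding valid_event_def by auto
  hence "finite (snd e)" using finite_subset by blast
  show ?case
  proof (cases "i = fst e")
    case True
    have "repair_node R (Suc d * \<beta>) (k * \<beta>) \<beta> ?N repairer_code (snd e) (exact_repair (rev es) e) r c
        = repair_node R (Suc d * \<beta>) (k * \<beta>) \<beta> node_code repairer_code (snd e) (exact_repair (rev es) e) r c"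
      using exact_repair_spec[OF e] D \<open>finite (snd e)\<close> Cons.IH[OF es] Cons.prems node_code_closed
      by (intro repair_node_cong) auto
    thus ?thesis using True exact_repair_spec[OF e, of "rev es"] Cons.prems by (simp add: Let_def)
  next
    case False thus ?thesis using Cons.IH[OF es] Cons.prems by (simp add: Let_def)
  qed
qed

lemma product_matrix_code_correct:
  "(\<forall>i<n. is_mat R (Suc d * \<beta>) M (node_code i)) \<and> is_mat R (k * \<beta>) M repairer_code \<and>
   (\<forall>es e. valid_event n d e \<longrightarrow> coeffs_ok R (Suc d * \<beta>) (k * \<beta>) \<beta> (snd e) (exact_repair es e)) \<and>
   (\<forall>es. list_all (valid_event n d) es \<longrightarrow>
      (\<forall>K. K \<subseteq> {..<n} \<and> card K = k \<longrightarrow>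
         recovers R M (Suc d * \<beta>) (run R (Suc d * \<beta>) (k * \<beta>) \<beta> node_code repairer_code exact_repair es) K))"
proof (intro conjI allI impI)
  show "is_mat R (Suc d * \<beta>) M (node_code i)" if "i < n" for i
    using node_code_closed[OF that] by (simp add: is_mat_def)
  show "is_mat R (k * \<beta>) M repairer_code" by (simp add: is_mat_def repairer_code_def)
  show "coeffs_ok R (Suc d * \<beta>) (k * \<beta>) \<beta> (snd e) (exact_repair es e)" if "valid_event n d e" for es e
    using exact_repair_spec[OF that] by blast
  fix es K assume es: "list_all (valid_event n d) es" and K: "K \<subseteq> {..<n} \<and> card K = k"
  have run_eq: "run R (Suc d * \<beta>) (k * \<beta>) \<beta> node_code repairer_code exact_repair es i r c = node_code i r c"
    if "i \<in> K" "r < Suc d * \<beta>" "c < M" for i r c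
    using run_rev_exact_repair[of "rev es" i r c] es K that by (auto simp: run_def list_all_rev)
  show "recovers R M (Suc d * \<beta>) (run R (Suc d * \<beta>) (k * \<beta>) \<beta> node_code repairer_code exact_repair es) K"
  proof (rule recovers_cong)
    show "recovers R M (Suc d * \<beta>) node_code K" using recovers_node_code K by blast
    show "is_mat R (Suc d * \<beta>) M (node_code i)" if "i \<in> K" for i
      using node_code_closed K that by (auto simp: is_mat_def)
  qed (rule run_eq)
qed

end

theorem proposition4:
  fixes n k d M \<alpha> \<alpha>' \<beta> :: nat
  assumes "1 \<le> k" and "k \<le> d" and "d \<le> n - 1"
    and "\<beta> > 0" and "2 * M = \<beta> * (k * (2 * d - k + 3))"
    and "\<alpha> = (d + 1) * \<beta>" and "\<alpha>' = k * \<beta>"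
  shows "\<exists>Q::nat. \<forall>F :: 'b ring.
           field F \<and> finite (carrier F) \<and> card (carrier F) \<ge> Q \<longrightarrow>
           (\<exists>N0 R \<sigma>.
              (\<forall>i<n. is_mat F \<alpha> M (N0 i)) \<and> is_mat F \<alpha>' M R \<and>
              (\<forall>es e. valid_event n d e \<longrightarrow> coeffs_ok F \<alpha> \<alpha>' \<beta> (snd e) (\<sigma> es e)) \<and>
              (\<forall>es. list_all (valid_event n d) es \<longrightarrow>
                 (\<forall>K. K \<subseteq> {..<n} \<and> card K = k \<longrightarrow>
                    recovers F M \<alpha> (run F \<alpha> \<alpha>' \<beta> N0 R \<sigma> es) K)))"
proof (intro exI[of _ n] allI impI, goal_cases)
  case (1 F)
  hence F: "field F" "finite (carrier F)" "card (carrier F) \<ge> n" by auto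
  then obtain pt where "pt ` {..<n} \<subseteq> carrier F" "inj_on pt {..<n}"
    using card_le_inj[of "{..<n}" "carrier F"] by auto
  have "finite (message_index \<beta> k d)"
    unfolding message_index_def by (rule finite_subset[of _ "{..<\<beta>} \<times> {..<k} \<times> {..d}"]) auto
  moreover have "M = card (message_index \<beta> k d)" using card_message_index[OF assms(2), of \<beta>] assms(5) by simp
  ultimately obtain \<phi> where \<phi>: "\<phi> ` {..<M} \<subseteq> message_index \<beta> k d" "inj_on \<phi> {..<M}"
    using card_le_inj[of "{..<M}" "message_index \<beta> k d"] by auto
  interpret product_matrix_code F n k d M \<beta> pt \<phi>
    using F assms(2) \<open>pt ` {..<n} \<subseteq> carrier F\<close> \<open>inj_on pt {..<n}\<close> \<phi>
    by (intro product_matrix_code.intro product_matrix_code_axioms.intro) auto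
  show ?case
    using product_matrix_code_correct unfolding assms(6,7) by (intro exI) simp
qed

end
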